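(* Let $k\geq2$, $n$, $r$ be positive integers with $r<\frac{(k-1)n}{k}$, and let $\mathcal{F}\subseteq\binom{[n]}{r}$ be $k$-wise intersecting. Let $\sigma$ be a permutation of $[n]$ (viewed as a cyclic order) such that $|\mathcal{F}_\sigma|=r$ and every member of $\mathcal{F}_\sigma$ contains $\sigma(v)$, for some position $v\in[n]$. Let $i\in[n]\setminus\{v,v-1\}$ (where $v-1=n$ if $v=1$), and let $\mu$ be obtained from $\sigma$ by swapping the entries in positions $i$ and $i+1$ (where $i+1=1$ if $i=n$). If $|\mathcal{F}_\mu|=r$, then every member of $\mathcal{F}_\mu$ contains $\sigma(v)$.
   Context: $\binom{[n]}{r}$ is the family of $r$-subsets of $[n]$. A family is $k$-wise intersecting if any $k$ of its members have nonempty common intersection. For a permutation $\sigma$ of $[n]$, a $\sigma$-interval of length $r$ is a set $\{\sigma(x),\sigma(x+1),\dots,\sigma(x+r-1)\}$ for some $x\in[n]$, indices modulo $n$; $\mathcal{F}_\sigma$ denotes the set of members of $\mathcal{F}$ that are $\sigma$-intervals. (The paper calls $\sigma$ saturated if $|\mathcal{F}_\sigma|=r$, and $v$-saturated if moreover all members of $\mathcal{F}_\sigma$ contain the common point at position $v$.) *)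

theory Defs
  imports "HOL-Combinatorics.Combinatorics"
begin

definition cyc :: "nat \<Rightarrow> nat \<Rightarrow> nat" where
  "cyc n m = ((m + n - 1) mod n) + 1"

definition sigma_interval :: "nat \<Rightarrow> (nat \<Rightarrow> nat) \<Rightarrow> nat \<Rightarrow> nat \<Rightarrow> nat set" where
  "sigma_interval n \<sigma> r x = (\<lambda>j. \<sigma> (cyc n (x + j))) ` {0..<r}"

definition F_sigma :: "nat \<Rightarrow> nat \<Rightarrow> (nat \<Rightarrow> nat) \<Rightarrow> nat set set \<Rightarrow> nat set set" where
  "F_sigma n r \<sigma> F = {A \<in> F. \<exists>x\<in>{1..n}. A = sigma_interval n \<sigma> r x}"

text \<open>k-wise intersecting: any k members (not necessarily distinct) have a common element.\<close>
definition kwise_intersecting :: "nat \<Rightarrow> 'a set set \<Rightarrow> bool" where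
  "kwise_intersecting k F \<longleftrightarrow> (\<forall>A. (\<forall>j<k. A j \<in> F) \<longrightarrow> (\<Inter>j<k. A j) \<noteq> {})"

end

theory Submission
  imports Defs
begin

text \<open>Measure positions by their offset from \<open>v\<close> in the cyclic order of \<open>\<sigma>\<close>. Saturation at \<open>v\<close>
  forces \<open>F\<^sub>\<sigma>\<close> to consist of all \<open>r\<close> intervals through \<open>v\<close>, and the one ending at offset \<open>t\<close> misses
  exactly the offsets \<open>t+1, \<dots>, t+(n-r)\<close>. Since the adjacent swap fixes \<open>v\<close>, a \<open>\<mu>\<close>-interval
  avoiding \<open>\<sigma>(v)\<close> occupies, in the order of \<open>\<sigma>\<close>, a window of \<open>r+1\<close> consecutive nonzero offsets. As
  \<open>r < (k-1)(n-r)\<close>, the gaps of \<open>k-1\<close> intervals through \<open>v\<close>, staggered by \<open>n-r\<close>, cover this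
  window, so together with the \<open>\<mu>\<close>-interval they are \<open>k\<close> members of \<open>F\<close> without a common point.\<close>

lemma cyc_in_range: "n > 0 \<Longrightarrow> cyc n m \<in> {1..n}"
  unfolding cyc_def by (simp add: Suc_leI)

lemma cyc_mod: "n > 0 \<Longrightarrow> int (cyc n m) mod int n = int m mod int n"
proof -
  assume "n > 0"
  then have "cyc n m mod n = m mod n"
    unfolding cyc_def by (simp add: mod_Suc_eq)
  then show ?thesis
    by (metis of_nat_mod)
qed

lemma cyc_cong:
  assumes "m mod n = m' mod n"
  shows "cyc n m = cyc n m'"
proof (cases "n = 0")
  case True
  then show ?thesis
    using assms by simp
next
  case False
  then have "m + n - 1 = m + (n - 1)" and "m' + n - 1 = m' + (n - 1)"
    by auto
  moreover have "(m + (n - 1)) mod n = (m' + (n - 1)) mod n"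
    using assms by (metis mod_add_left_eq)
  ultimately show ?thesis
    unfolding cyc_def by simp
qed

lemma cyc_eq_self:
  assumes "p \<in> {1..n}"
  shows "cyc n p = p"
proof -
  have "p + n - 1 = (p - 1) + n" and "p - 1 < n"
    using assms by auto
  then have "(p + n - 1) mod n = p - 1"
    by (metis mod_add_self2 mod_less)
  then show ?thesis
    using assms unfolding cyc_def by simp
qed

lemma eq_if_mod_eq:
  "p \<in> {1..n} \<Longrightarrow> q \<in> {1..n} \<Longrightarrow> int p mod int n = int q mod int n \<Longrightarrow> p = q"
  by (metis cyc_cong cyc_eq_self of_nat_eq_iff of_nat_mod)

definition interval_positions :: "nat \<Rightarrow> nat \<Rightarrow> nat \<Rightarrow> nat set" where
  "interval_positions n r x = (\<lambda>j. cyc n (x + j)) ` {0..<r}"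

lemma sigma_interval_eq_image:
  "sigma_interval n \<sigma> r x = \<sigma> ` interval_positions n r x"
  unfolding sigma_interval_def interval_positions_def by (simp add: image_image)

lemma interval_positions_subset: "n > 0 \<Longrightarrow> interval_positions n r x \<subseteq> {1..n}"
  unfolding interval_positions_def using cyc_in_range by blast

lemma mem_interval_positions_iff:
  assumes "n > 0" and "r \<le> n" and "p \<in> {1..n}"
  shows "p \<in> interval_positions n r x \<longleftrightarrow> (int p - int x) mod int n < int r"
proof
  assume "p \<in> interval_positions n r x"
  then obtain j where j: "j < r" "p = cyc n (x + j)"
    unfolding interval_positions_def by auto
  then have "(int p - int x) mod int n = (int (x + j) - int x) mod int n"
    using cyc_mod[OF assms(1)] by (metis mod_diff_left_eq)
  also have "\<dots> = int j"
    using j assms(2) by simp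
  finally show "(int p - int x) mod int n < int r"
    using j by simp
next
  assume lt: "(int p - int x) mod int n < int r"
  define j where "j = nat ((int p - int x) mod int n)"
  have j: "j < r" "int j = (int p - int x) mod int n"
    using lt assms(1) unfolding j_def by (auto simp: nat_less_iff)
  have "int (cyc n (x + j)) mod int n = (int x + (int p - int x) mod int n) mod int n"
    using cyc_mod[OF assms(1)] j(2) by simp
  also have "\<dots> = int p mod int n"
    by (simp add: mod_add_right_eq)
  finally have "cyc n (x + j) = p"
    using eq_if_mod_eq[OF cyc_in_range[OF assms(1)] assms(3)] by blast
  then show "p \<in> interval_positions n r x"
    unfolding interval_positions_def using j by force
qed

definition interval_start_ending :: "nat \<Rightarrow> nat \<Rightarrow> nat \<Rightarrow> nat" where
  "interval_start_ending n r e = cyc n (e + n + 1 - r)"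

lemma mem_interval_ending_iff:
  assumes "n > 0" and "r \<le> n" and "p \<in> {1..n}"
  shows "p \<in> interval_positions n r (interval_start_ending n r e)
    \<longleftrightarrow> (int e - int p) mod int n < int r"
proof -
  define u where "u = (int e - int p) mod int n"
  have u: "0 \<le> u" "u < int n"
    using assms(1) unfolding u_def by auto
  have "(int p - int (interval_start_ending n r e)) mod int n
      = (int p - int (e + n + 1 - r)) mod int n"
    unfolding interval_start_ending_def using cyc_mod[OF assms(1)] by (metis mod_diff_right_eq)
  also have "\<dots> = ((int r - 1 - (int e - int p)) + (- 1) * int n) mod int n"
    using assms(2) by (simp add: algebra_simps)
  also have "\<dots> = (int r - 1 - u) mod int n"
    unfolding u_def by (metis mod_diff_right_eq mod_mult_self1)
  also have "\<dots> = (if u < int r then int r - 1 - u else int r - 1 - u + int n)"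
  proof (cases "u < int r")
    case True
    then show ?thesis
      using u assms(2) by (simp add: mod_pos_pos_trivial)
  next
    case False
    then have "(int r - 1 - u) mod int n = (int r - 1 - u + int n) mod int n"
      by simp
    also have "\<dots> = int r - 1 - u + int n"
      using False u by (intro mod_pos_pos_trivial) auto
    finally show ?thesis
      using False by simp
  qed
  finally have "(int p - int (interval_start_ending n r e)) mod int n < int r \<longleftrightarrow> u < int r"
    using u by simp
  then show ?thesis
    using mem_interval_positions_iff[OF assms] unfolding u_def by simp
qed

lemma interval_start_ending_cong:
  assumes "r \<le> n" and "e mod n = e' mod n"
  shows "interval_start_ending n r e = interval_start_ending n r e'"
proof -
  have "(e + (n + 1 - r)) mod n = (e' + (n + 1 - r)) mod n"
    using assms(2) by (metis mod_add_left_eq)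
  then show ?thesis
    unfolding interval_start_ending_def using assms(1) by (intro cyc_cong) simp
qed

lemma interval_start_ending_last:
  assumes "x \<in> {1..n}" and "r > 0"
  shows "interval_start_ending n r (x + r - 1) = x"
proof -
  have "cyc n (x + r - 1 + n + 1 - r) = cyc n x"
    using assms(2) by (intro cyc_cong) simp
  then show ?thesis
    unfolding interval_start_ending_def using cyc_eq_self[OF assms(1)] by simp
qed

lemma interval_start_through:
  assumes "n > 0" and "r > 0" and "r \<le> n" and "x \<in> {1..n}" and "v \<in> {1..n}"
    and "v \<in> interval_positions n r x"
  shows "\<exists>t<r. x = interval_start_ending n r (v + t)"
proof -
  define e where "e = x + r - 1"
  have x_eq: "x = interval_start_ending n r e"
    unfolding e_def using interval_start_ending_last[OF assms(4,2)] by simp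
  then have lt: "(int e - int v) mod int n < int r"
    using assms(6) mem_interval_ending_iff[OF assms(1,3,5)] by simp
  define t where "t = nat ((int e - int v) mod int n)"
  have "t < r"
    using lt assms(1) unfolding t_def by (simp add: nat_less_iff)
  moreover have "int (v + t) mod int n = int e mod int n"
    using assms(1) unfolding t_def by (simp add: mod_add_right_eq)
  then have "interval_start_ending n r (v + t) = x"
    using x_eq interval_start_ending_cong[OF assms(3)] by (metis of_nat_eq_iff of_nat_mod)
  ultimately show ?thesis
    by auto
qed

lemma saturated_interval_through_in_family:
  assumes "inj \<sigma>" and "n > 0" and "r > 0" and "r \<le> n" and "v \<in> {1..n}"
    and "card (F_sigma n r \<sigma> F) = r" and "\<forall>A\<in>F_sigma n r \<sigma> F. \<sigma> v \<in> A"
    and "t < r"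
  shows "sigma_interval n \<sigma> r (interval_start_ending n r (v + t)) \<in> F"
proof -
  define through where "through s = sigma_interval n \<sigma> r (interval_start_ending n r (v + s))" for s
  have "F_sigma n r \<sigma> F \<subseteq> through ` {0..<r}"
  proof
    fix A assume A: "A \<in> F_sigma n r \<sigma> F"
    then obtain x where x: "x \<in> {1..n}" "A = \<sigma> ` interval_positions n r x"
      unfolding F_sigma_def sigma_interval_eq_image by blast
    have "v \<in> interval_positions n r x"
      using assms(7) A x(2) inj_image_mem_iff[OF assms(1)] by blast
    then obtain s where "s < r" "x = interval_start_ending n r (v + s)"
      using interval_start_through[OF assms(2-4) x(1) assms(5)] by blast
    then show "A \<in> through ` {0..<r}"
      unfolding through_def using x(2) sigma_interval_eq_image by auto
  qed
  moreover have "card (through ` {0..<r}) \<le> r"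
    using card_image_le[of "{0..<r}" through] by simp
  ultimately have "F_sigma n r \<sigma> F = through ` {0..<r}"
    using card_seteq assms(6) by (metis finite_atLeastLessThan finite_imageI)
  then show ?thesis
    using assms(8) unfolding through_def F_sigma_def by auto
qed

definition offset :: "nat \<Rightarrow> nat \<Rightarrow> nat \<Rightarrow> int" where
  "offset n v p = (int p - int v) mod int n"

lemma offset_range: "n > 0 \<Longrightarrow> 0 \<le> offset n v p \<and> offset n v p < int n"
  unfolding offset_def by simp

lemma inj_on_offset: "inj_on (offset n v) {1..n}"
proof (rule inj_onI)
  fix p q assume p: "p \<in> {1..n}" and q: "q \<in> {1..n}" and eq: "offset n v p = offset n v q"
  have "int p mod int n = ((int p - int v) mod int n + int v) mod int n"
    by (simp add: mod_add_left_eq)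
  also have "\<dots> = int q mod int n"
    using eq unfolding offset_def by (simp add: mod_add_left_eq)
  finally show "p = q"
    using eq_if_mod_eq[OF p q] by blast
qed

lemma offset_self [simp]: "offset n v v = 0"
  unfolding offset_def by simp

lemma offset_eq_0_iff: "p \<in> {1..n} \<Longrightarrow> v \<in> {1..n} \<Longrightarrow> offset n v p = 0 \<longleftrightarrow> p = v"
  using inj_on_offset[THEN inj_onD, of n v p v] by auto

lemma offset_cyc: "n > 0 \<Longrightarrow> offset n v (cyc n m) = offset n v m"
  unfolding offset_def using cyc_mod by (metis mod_diff_left_eq)

lemma offset_adjacent:
  assumes "n > 0" and "v \<in> {1..n}" and "i \<in> {1..n} - {v, cyc n (v + n - 1)}"
  shows "1 \<le> offset n v i" and "offset n v (cyc n (i + 1)) = offset n v i + 1"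
proof -
  have "offset n v i \<noteq> 0"
    using assms offset_eq_0_iff by blast
  then show "1 \<le> offset n v i"
    using offset_range[OF assms(1), of v i] by presburger
  have "offset n v (cyc n (v + n - 1)) = int n - 1"
  proof -
    have "offset n v (v + n - 1) = (int n - 1) mod int n"
      unfolding offset_def using assms(2) by (simp add: of_nat_diff)
    then show ?thesis
      using assms(1) offset_cyc by (cases "n = 1") (simp_all add: zmod_zminus1_eq_if)
  qed
  moreover have "offset n v i \<noteq> offset n v (cyc n (v + n - 1))"
    using assms(3) inj_on_offset[THEN inj_onD] cyc_in_range[OF assms(1)] by blast
  ultimately have "offset n v i \<noteq> int n - 1"
    by simp
  then have "offset n v i + 1 < int n"
    using offset_range[OF assms(1), of v i] by presburger
  moreover have "offset n v (i + 1) = (offset n v i + 1) mod int n"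
    unfolding offset_def mod_add_left_eq by (simp add: algebra_simps)
  ultimately show "offset n v (cyc n (i + 1)) = offset n v i + 1"
    using offset_cyc[OF assms(1)] offset_range[OF assms(1)] by (simp add: mod_pos_pos_trivial)
qed

lemma inj_on_transpose_apply:
  assumes "inj_on f A" and "a \<in> A" and "b \<in> A" and "x \<in> A"
  shows "f (transpose a b x) = transpose (f a) (f b) (f x)"
  using assms by (auto simp: transpose_def dest: inj_onD)

lemma offsets_of_interval_avoiding:
  assumes "n > 0" and "r > 0" and "r \<le> n" and "v \<in> {1..n}"
    and "v \<notin> interval_positions n r b"
  shows "\<exists>w\<ge>1. \<forall>p\<in>interval_positions n r b. w \<le> offset n v p \<and> offset n v p < w + int r"
proof (intro exI conjI ballI)
  have gap: "int r \<le> (int v - int b) mod int n"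
    using assms mem_interval_positions_iff by (meson not_less)
  have w_eq: "offset n v b = int n - (int v - int b) mod int n"
  proof -
    have "(int v - int b) mod int n \<noteq> 0"
      using gap assms(2) by auto
    then show ?thesis
      unfolding offset_def by (subst minus_diff_eq[symmetric], subst zmod_zminus1_eq_if) simp
  qed
  have gap_lt: "(int v - int b) mod int n < int n"
    using assms(1) by simp
  with w_eq show "1 \<le> offset n v b"
    by linarith
  fix p assume p: "p \<in> interval_positions n r b"
  have "p \<in> {1..n}"
    using p interval_positions_subset[OF assms(1)] by blast
  then have lt: "0 \<le> (int p - int b) mod int n" "(int p - int b) mod int n < int r"
    using p assms(1) mem_interval_positions_iff[OF assms(1,3)] by auto
  have "offset n v p = ((int b - int v) + (int p - int b)) mod int n"
    unfolding offset_def by simp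
  also have "\<dots> = (offset n v b + (int p - int b) mod int n) mod int n"
    unfolding offset_def by (metis mod_add_eq)
  also have "\<dots> = offset n v b + (int p - int b) mod int n"
    using w_eq gap gap_lt lt by (intro mod_pos_pos_trivial) linarith+
  finally show "offset n v b \<le> offset n v p" "offset n v p < offset n v b + int r"
    using lt by auto
qed

lemma transpose_adjacent_window:
  fixes c w :: int
  assumes "1 \<le> c" and "1 \<le> w"
  shows "\<exists>a\<ge>1. \<forall>e\<in>{w..<w + int r}. a \<le> transpose c (c + 1) e \<and> transpose c (c + 1) e \<le> a + int r"
proof (intro exI conjI ballI)
  let ?a = "if c + 1 = w then c else w"
  show "1 \<le> ?a"
    using assms by simp
  fix e assume "e \<in> {w..<w + int r}"
  then show "?a \<le> transpose c (c + 1) e" "transpose c (c + 1) e \<le> ?a + int r"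
    by (auto simp: transpose_def)
qed

lemma offset_window_of_swapped_interval:
  assumes "n > 0" and "r > 0" and "r \<le> n" and "v \<in> {1..n}"
    and "i \<in> {1..n} - {v, cyc n (v + n - 1)}"
    and "v \<notin> transpose i (cyc n (i + 1)) ` interval_positions n r b"
  shows "\<exists>a\<ge>1. \<forall>q\<in>transpose i (cyc n (i + 1)) ` interval_positions n r b.
           a \<le> offset n v q \<and> offset n v q \<le> a + int r"
proof -
  define i' where "i' = cyc n (i + 1)"
  have i': "i' \<in> {1..n}" "offset n v i' = offset n v i + 1" "1 \<le> offset n v i"
    unfolding i'_def using cyc_in_range[OF assms(1)] offset_adjacent[OF assms(1,4,5)] by auto
  then have "i' \<noteq> v"
    by auto
  then have "transpose i i' v = v"
    using assms(5) by simp
  then have "v \<notin> interval_positions n r b"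
    using assms(6) unfolding i'_def by (metis image_eqI)
  then obtain w where "1 \<le> w" and w: "\<forall>p\<in>interval_positions n r b. offset n v p \<in> {w..<w + int r}"
    using offsets_of_interval_avoiding[OF assms(1-4)] by auto
  then obtain a where "1 \<le> a" and a: "\<forall>e\<in>{w..<w + int r}.
      a \<le> transpose (offset n v i) (offset n v i + 1) e \<and> transpose (offset n v i) (offset n v i + 1) e \<le> a + int r"
    using transpose_adjacent_window[OF i'(3)] by blast
  have "offset n v (transpose i i' p) = transpose (offset n v i) (offset n v i + 1) (offset n v p)"
    if "p \<in> interval_positions n r b" for p
  proof -
    have "p \<in> {1..n}"
      using that interval_positions_subset[OF assms(1)] by blast
    then have "offset n v (transpose i i' p) = transpose (offset n v i) (offset n v i') (offset n v p)"
      by (intro inj_on_transpose_apply[OF inj_on_offset]) (use assms(5) i'(1) in auto)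
    then show ?thesis
      using i'(2) by simp
  qed
  then show ?thesis
    using \<open>1 \<le> a\<close> a w unfolding i'_def by auto
qed

lemma not_mem_interval_ending_after:
  assumes "n > 0" and "r \<le> n" and "p \<in> {1..n}"
    and "int t < offset n v p" and "offset n v p \<le> int t + int (n - r)"
  shows "p \<notin> interval_positions n r (interval_start_ending n r (v + t))"
proof -
  have "(int (v + t) - int p) mod int n = (int t - offset n v p) mod int n"
    unfolding offset_def mod_diff_right_eq by (simp add: algebra_simps)
  also have "\<dots> = (int t - offset n v p + int n) mod int n"
    by simp
  also have "\<dots> = int t - offset n v p + int n"
    using assms(2,4,5) by (intro mod_pos_pos_trivial) auto
  finally have "int r \<le> (int (v + t) - int p) mod int n"
    using assms(2,5) by simp
  then show ?thesis
    using mem_interval_ending_iff[OF assms(1-3)] by simp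
qed

lemma window_covered_by_gaps:
  fixes a d :: int and k m r :: nat
  assumes "1 \<le> a" and "a \<le> d" and "d \<le> a + int r" and "d < int r + int m"
    and "r < (k - 1) * m"
  shows "\<exists>j<k - 1. min (a - 1 + int j * int m) (int r - 1) < d
                   \<and> d \<le> min (a - 1 + int j * int m) (int r - 1) + int m"
proof -
  have "m > 0"
    using assms(5) by (cases m) auto
  define j where "j = nat ((d - a) div int m)"
  have "int j = (d - a) div int m"
    unfolding j_def using assms(2) \<open>m > 0\<close> by (simp add: pos_imp_zdiv_nonneg_iff)
  then have "int j * int m + (d - a) mod int m = d - a"
    by simp
  moreover have "0 \<le> (d - a) mod int m" "(d - a) mod int m < int m"
    using \<open>m > 0\<close> by auto
  ultimately have j: "int j * int m \<le> d - a" "d - a < int j * int m + int m"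
    by auto
  have "int r < int ((k - 1) * m)"
    using assms(5) by (simp only: of_nat_less_iff)
  then have "int (j * m) < int ((k - 1) * m)"
    using j(1) assms(3) unfolding of_nat_mult by linarith
  then have "j * m < (k - 1) * m"
    by (simp only: of_nat_less_iff)
  then have "j < k - 1"
    by simp
  then show ?thesis
    using j assms(1,4) by (intro exI[of _ j]) auto
qed

lemma rank_bound_imp_gap:
  fixes k n r :: nat
  assumes "k \<ge> 2" and "real r < real ((k - 1) * n) / real k"
  shows "r < (k - 1) * (n - r)"
proof -
  have "real (r * k) < real ((k - 1) * n)"
    using assms by (simp add: pos_less_divide_eq)
  then have "r * k < (k - 1) * n"
    by (simp only: of_nat_less_iff)
  moreover have "r * k = (k - 1) * r + r"
    using assms(1) by (cases k) (simp_all add: algebra_simps)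
  ultimately show ?thesis
    by (simp add: diff_mult_distrib2 less_diff_conv)
qed

lemma saturated_family_blocks_window:
  assumes "inj \<sigma>" and "n > 0" and "r > 0" and "v \<in> {1..n}"
    and "card (F_sigma n r \<sigma> F) = r" and "\<forall>A\<in>F_sigma n r \<sigma> F. \<sigma> v \<in> A"
    and "r < (k - 1) * (n - r)" and "1 \<le> a"
  shows "\<exists>A. (\<forall>j<k - 1. A j \<in> F) \<and>
    (\<forall>q\<in>{1..n}. a \<le> offset n v q \<and> offset n v q \<le> a + int r \<longrightarrow> (\<exists>j<k - 1. \<sigma> q \<notin> A j))"
proof -
  have "r \<le> n"
    using assms(7) by (rule contrapos_pp) simp
  define t where "t j = nat (min (a - 1 + int j * int (n - r)) (int r - 1))" for j
  have t: "t j < r" "int (t j) = min (a - 1 + int j * int (n - r)) (int r - 1)" for j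
    using assms(3,8) unfolding t_def by auto
  define A where "A j = sigma_interval n \<sigma> r (interval_start_ending n r (v + t j))" for j
  show ?thesis
  proof (rule exI[of _ A], intro conjI allI ballI impI)
    fix j
    show "A j \<in> F"
      unfolding A_def using saturated_interval_through_in_family[OF assms(1-3) \<open>r \<le> n\<close> assms(4-6) t(1)] .
  next
    fix q assume q: "q \<in> {1..n}" and window: "a \<le> offset n v q \<and> offset n v q \<le> a + int r"
    have "offset n v q < int r + int (n - r)"
      using offset_range[OF assms(2)] \<open>r \<le> n\<close> by simp
    then obtain j where "j < k - 1" and "int (t j) < offset n v q" "offset n v q \<le> int (t j) + int (n - r)"
      using window_covered_by_gaps[OF assms(8) _ _ _ assms(7)] window t(2) by metis
    then have "q \<notin> interval_positions n r (interval_start_ending n r (v + t j))"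
      using not_mem_interval_ending_after[OF assms(2) \<open>r \<le> n\<close> q] by blast
    then show "\<exists>j<k - 1. \<sigma> q \<notin> A j"
      using \<open>j < k - 1\<close> assms(1) unfolding A_def sigma_interval_eq_image by (auto simp: inj_image_mem_iff)
  qed
qed

lemma kwise_intersecting_common_point:
  assumes "kwise_intersecting k F" and "k > 0" and "\<forall>j<k - 1. A j \<in> F" and "B \<in> F"
  shows "\<exists>y\<in>B. \<forall>j<k - 1. y \<in> A j"
proof -
  define X where "X j = (if j < k - 1 then A j else B)" for j
  have "\<forall>j<k. X j \<in> F"
    using assms(3,4) unfolding X_def by simp
  then have "(\<Inter>j<k. X j) \<noteq> {}"
    using assms(1) unfolding kwise_intersecting_def by (elim allE[of _ X]) simp
  then obtain y where y: "\<And>j. j < k \<Longrightarrow> y \<in> X j"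
    by blast
  have "y \<in> B"
    using y[of "k - 1"] assms(2) unfolding X_def by simp
  moreover have "y \<in> A j" if "j < k - 1" for j
    using y[of j] that unfolding X_def by simp
  ultimately show ?thesis
    by blast
qed

theorem lemma2p3:
  fixes k n r v i :: nat and F :: "nat set set" and \<sigma> :: "nat \<Rightarrow> nat"
  assumes "k \<ge> 2" and "n > 0" and "r > 0"
    and "real r < real ((k - 1) * n) / real k"
    and "F \<subseteq> {A. A \<subseteq> {1..n} \<and> card A = r}"
    and "kwise_intersecting k F"
    and "\<sigma> permutes {1..n}"
    and "v \<in> {1..n}"
    and "card (F_sigma n r \<sigma> F) = r"
    and "\<forall>A\<in>F_sigma n r \<sigma> F. \<sigma> v \<in> A"
    and "i \<in> {1..n} - {v, cyc n (v + n - 1)}"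
    and "card (F_sigma n r (\<sigma> \<circ> transpose i (cyc n (i + 1))) F) = r"
  shows "\<forall>A\<in>F_sigma n r (\<sigma> \<circ> transpose i (cyc n (i + 1))) F. \<sigma> v \<in> A"
proof
  let ?\<tau> = "transpose i (cyc n (i + 1))"
  fix B assume "B \<in> F_sigma n r (\<sigma> \<circ> ?\<tau>) F"
  then obtain b where B: "B = \<sigma> ` ?\<tau> ` interval_positions n r b" and "B \<in> F"
    unfolding F_sigma_def sigma_interval_eq_image by (auto simp: image_comp)
  have gap: "r < (k - 1) * (n - r)"
    using rank_bound_imp_gap[OF assms(1,4)] .
  then have "r \<le> n"
    by (rule contrapos_pp) simp
  show "\<sigma> v \<in> B"
  proof (rule ccontr)
    assume "\<sigma> v \<notin> B"
    then obtain a where "1 \<le> a" and window: "\<forall>q\<in>?\<tau> ` interval_positions n r b.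
        a \<le> offset n v q \<and> offset n v q \<le> a + int r"
      using offset_window_of_swapped_interval[OF assms(2,3) \<open>r \<le> n\<close> assms(8,11)] B by blast
    obtain A where A: "\<forall>j<k - 1. A j \<in> F" and blocks: "\<forall>q\<in>{1..n}.
        a \<le> offset n v q \<and> offset n v q \<le> a + int r \<longrightarrow> (\<exists>j<k - 1. \<sigma> q \<notin> A j)"
      using saturated_family_blocks_window[OF permutes_inj[OF assms(7)] assms(2,3,8-10) gap \<open>1 \<le> a\<close>]
      by blast
    obtain y where "y \<in> B" and y: "\<forall>j<k - 1. y \<in> A j"
      using kwise_intersecting_common_point[OF assms(6) _ A \<open>B \<in> F\<close>] assms(1) by auto
    then obtain q where q: "q \<in> ?\<tau> ` interval_positions n r b" and "y = \<sigma> q"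
      using B by blast
    have "q \<in> {1..n}"
      using \<open>y \<in> B\<close> \<open>B \<in> F\<close> \<open>y = \<sigma> q\<close> assms(5) permutes_in_image[OF assms(7)] by blast
    then show False
      using blocks window q y \<open>y = \<sigma> q\<close> by blast
  qed
qed

end
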